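(* Let $\gamma\in\mathbb N\setminus\{1\}$, $b_1<b_2<\dots<b_\gamma$ real numbers, and $a\in C(\mathbb R,\mathbb R)$ with $a(x)=x^\gamma$ for all $x\in\mathbb R$. Then (i) there exist unique $c_0,c_1,\dots,c_\gamma\in\mathbb R$ such that for all $k\in\{0,1,\dots,\gamma\}$, $\mathbb 1_{\{\gamma\}}(k)c_0+\sum_{i=1}^\gamma c_i(b_i)^k=\mathbb 1_{\{\gamma-1\}}(k)\gamma^{-1}$; (ii) with these constants, $\Psi=\mathbf A_{1,c_0}\bullet\bigl(\bigoplus_{i=1}^\gamma(c_i\circledast(\mathfrak i_1\bullet\mathbf A_{1,b_i}))\bigr)\in\mathbf N$ is well defined; (iii) $\mathcal D(\Psi)=(1,\gamma,1)$; (iv) $\mathcal R_a(\Psi)\in C(\mathbb R,\mathbb R)$; and (v) $(\mathcal R_a(\Psi))(x)=x$ for all $x\in\mathbb R$.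
   Context: Artificial neural networks (ANNs). Let $\mathbb N=\{1,2,\dots\}$ and $\mathbf N=\bigcup_{L\in\mathbb N}\bigcup_{l_0,\dots,l_L\in\mathbb N}\prod_{k=1}^L(\mathbb R^{l_k\times l_{k-1}}\times\mathbb R^{l_k})$. For $\Phi=((W_1,B_1),\dots,(W_L,B_L))$ in the $(l_0,\dots,l_L)$ component, $\mathcal L(\Phi)=L$, $\mathcal I(\Phi)=l_0$, $\mathcal O(\Phi)=l_L$, $\mathcal D(\Phi)=(l_0,\dots,l_L)$. For $a\in C(\mathbb R,\mathbb R)$ the realization is $(\mathcal R_a(\Phi))(x_0)=W_Lx_{L-1}+B_L$ with $x_k=\mathfrak M_{a,l_k}(W_kx_{k-1}+B_k)$, $k=1,\dots,L-1$, $\mathfrak M_{a,m}$ applying $a$ componentwise. $\operatorname I_n$ is the identity matrix; $\mathbf A_{W,B}=((W,B))$ (for reals $w,b$, $\mathbf A_{w,b}$ has $1\times1$ weight $w$ and bias $b$). Composition: for $\Phi_1=((W_1,B_1),\dots,(W_L,B_L))$, $\Phi_2=((\mathscr W_1,\mathscr B_1),\dots,(\mathscr W_{\mathfrak L},\mathscr B_{\mathfrak L}))$ with $\mathcal I(\Phi_1)=\mathcal O(\Phi_2)$, $\Phi_1\bullet\Phi_2=((\mathscr W_1,\mathscr B_1),\dots,(\mathscr W_{\mathfrak L-1},\mathscr B_{\mathfrak L-1}),(W_1\mathscr W_{\mathfrak L},W_1\mathscr B_{\mathfrak L}+B_1),(W_2,B_2),\dots,(W_L,B_L))$. $\lambda\circledast\Phi=\mathbf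 A_{\lambda\operatorname I_{\mathcal O(\Phi)},0}\bullet\Phi$. $\mathbf P_n(\Phi_1,\dots,\Phi_n)$ (equal lengths) has $k$-th layer $(\operatorname{diag}(W_{1,k},\dots,W_{n,k}),(B_{1,k},\dots,B_{n,k}))$. $\mathfrak S_{m,n}=\mathbf A_{(\operatorname I_m\cdots\operatorname I_m),0}$, $\mathfrak T_{m,n}=\mathbf A_{(\operatorname I_m\cdots\operatorname I_m)^\top,0}$ ($n$ blocks). For $\Phi_u,\dots,\Phi_v$ with equal $\mathcal L,\mathcal I,\mathcal O$: $\bigoplus_{k=u}^v\Phi_k=\mathfrak S_{\mathcal O(\Phi_u),v-u+1}\bullet([\mathbf P_{v-u+1}(\Phi_u,\dots,\Phi_v)]\bullet\mathfrak T_{\mathcal I(\Phi_u),v-u+1})$. $\mathfrak i_n=((\operatorname I_n,0),(\operatorname I_n,0))\in(\mathbb R^{n\times n}\times\mathbb R^n)^2$. *)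

theory Defs
  imports Complex_Main
begin

text \<open>Matrices are lists of rows (real list list), vectors are real lists.
  A layer is a pair (W, B); an ANN is a list of layers (first layer first).\<close>

type_synonym layer = "real list list \<times> real list"
type_synonym ann = "layer list"

definition ncols :: "real list list \<Rightarrow> nat" where
  "ncols M = (if M = [] then 0 else length (hd M))"

definition matvec :: "real list list \<Rightarrow> real list \<Rightarrow> real list" where
  "matvec W x = map (\<lambda>row. \<Sum>j<length x. row ! j * x ! j) W"

definition matmul :: "real list list \<Rightarrow> real list list \<Rightarrow> real list list" where
  "matmul A B = map (\<lambda>row. map (\<lambda>j. \<Sum>k<length B. row ! k * (B ! k) ! j) [0..<ncols B]) A"

definition vadd :: "real list \<Rightarrow> real list \<Rightarrow> real list" where
  "vadd x y = map2 (+) x y"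

definition idm :: "nat \<Rightarrow> real list list" where
  "idm n = map (\<lambda>i. map (\<lambda>j. if i = j then 1 else 0) [0..<n]) [0..<n]"

definition ann_dims :: "ann \<Rightarrow> nat list" where
  "ann_dims \<Phi> = ncols (fst (hd \<Phi>)) # map (\<lambda>l. length (snd l)) \<Phi>"

definition ann_L :: "ann \<Rightarrow> nat" where "ann_L \<Phi> = length \<Phi>"
definition ann_I :: "ann \<Rightarrow> nat" where "ann_I \<Phi> = hd (ann_dims \<Phi>)"
definition ann_O :: "ann \<Rightarrow> nat" where "ann_O \<Phi> = last (ann_dims \<Phi>)"

definition is_ANN :: "ann \<Rightarrow> bool" where
  "is_ANN \<Phi> \<longleftrightarrow> \<Phi> \<noteq> [] \<and> (\<forall>d\<in>set (ann_dims \<Phi>). d \<ge> 1) \<and>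
     (\<forall>k<length \<Phi>. length (fst (\<Phi> ! k)) = ann_dims \<Phi> ! (k+1) \<and>
        (\<forall>row\<in>set (fst (\<Phi> ! k)). length row = ann_dims \<Phi> ! k) \<and>
        length (snd (\<Phi> ! k)) = ann_dims \<Phi> ! (k+1))"

definition affine :: "layer \<Rightarrow> real list \<Rightarrow> real list" where
  "affine l x = vadd (matvec (fst l) x) (snd l)"

fun realize :: "(real \<Rightarrow> real) \<Rightarrow> ann \<Rightarrow> real list \<Rightarrow> real list" where
  "realize a [] x = x"
| "realize a [l] x = affine l x"
| "realize a (l # l' # ls) x = realize a (l' # ls) (map a (affine l x))"

definition annA :: "real list list \<Rightarrow> real list \<Rightarrow> ann" where
  "annA W B = [(W, B)]"

definition annA1 :: "real \<Rightarrow> real \<Rightarrow> ann" where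
  "annA1 w b = [([[w]], [b])]"

text \<open>Composition Phi1 \<bullet> Phi2 (Phi2 applied first).\<close>
definition comp :: "ann \<Rightarrow> ann \<Rightarrow> ann" where
  "comp \<Phi>1 \<Phi>2 =
     butlast \<Phi>2 @
     [(matmul (fst (hd \<Phi>1)) (fst (last \<Phi>2)),
       vadd (matvec (fst (hd \<Phi>1)) (snd (last \<Phi>2))) (snd (hd \<Phi>1)))] @ tl \<Phi>1"

definition smul :: "real \<Rightarrow> ann \<Rightarrow> ann" where
  "smul c \<Phi> = comp (annA (map (map (\<lambda>x. c * x)) (idm (ann_O \<Phi>))) (replicate (ann_O \<Phi>) 0)) \<Phi>"

fun blockdiag :: "real list list list \<Rightarrow> real list list" where
  "blockdiag [] = []"
| "blockdiag (M # Ms) =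
     map (\<lambda>r. r @ replicate (sum_list (map ncols Ms)) 0) M @
     map (\<lambda>r. replicate (ncols M) 0 @ r) (blockdiag Ms)"

text \<open>Parallelization P_n(Phi_1,...,Phi_n) (networks of equal length).\<close>
definition par :: "ann list \<Rightarrow> ann" where
  "par \<Phi>s = map (\<lambda>k. (blockdiag (map (\<lambda>\<Phi>. fst (\<Phi> ! k)) \<Phi>s), concat (map (\<lambda>\<Phi>. snd (\<Phi> ! k)) \<Phi>s)))
     [0..<length (hd \<Phi>s)]"

definition annS :: "nat \<Rightarrow> nat \<Rightarrow> ann" where
  "annS m n = annA (map (\<lambda>row. concat (replicate n row)) (idm m)) (replicate m 0)"

definition annT :: "nat \<Rightarrow> nat \<Rightarrow> ann" where
  "annT m n = annA (concat (replicate n (idm m))) (replicate (m * n) 0)"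

text \<open>Sum of networks Phi_u \<oplus> ... \<oplus> Phi_v, given as the list [Phi_u, ..., Phi_v].\<close>
definition annsum :: "ann list \<Rightarrow> ann" where
  "annsum \<Phi>s = comp (annS (ann_O (hd \<Phi>s)) (length \<Phi>s))
                 (comp (par \<Phi>s) (annT (ann_I (hd \<Phi>s)) (length \<Phi>s)))"

definition annid :: "nat \<Rightarrow> ann" where
  "annid n = [(idm n, replicate n 0), (idm n, replicate n 0)]"

end

theory Submission
  imports Defs "Jordan_Normal_Form.Determinant" "HOL-Computational_Algebra.Polynomial"
begin

text \<open>By the binomial theorem,
  \<open>c\<^sub>0 + \<Sum>\<^sub>i c\<^sub>i (x + b\<^sub>i)\<^sup>\<gamma> = c\<^sub>0 + \<Sum>\<^sub>k (\<gamma> choose k) x\<^sup>\<gamma>\<^sup>-\<^sup>k \<Sum>\<^sub>i c\<^sub>i b\<^sub>i\<^sup>k\<close>,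
  and the linear system says precisely that the inner sums vanish for \<open>k < \<gamma> - 1\<close>, equal
  \<open>1/\<gamma>\<close> for \<open>k = \<gamma> - 1\<close> and cancel \<open>c\<^sub>0\<close> for \<open>k = \<gamma>\<close>, so the total is \<open>x\<close>. The equations
  with \<open>k < \<gamma>\<close> form a transposed Vandermonde system in the distinct nodes \<open>b\<^sub>i\<close>, hence determine
  \<open>c\<^sub>1, \<dots>, c\<^sub>\<gamma>\<close> uniquely, and the equation with \<open>k = \<gamma>\<close> then fixes \<open>c\<^sub>0\<close>. Unfolding composition,
  scalar multiplication and the sum of networks, \<open>\<Psi>\<close> is the shallow network with input weights 1,
  hidden biases \<open>b\<^sub>i\<close>, output weights \<open>c\<^sub>i\<close> and output bias \<open>c\<^sub>0\<close>, which realizes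
  \<open>x \<mapsto> c\<^sub>0 + \<Sum>\<^sub>i c\<^sub>i (x + b\<^sub>i)\<^sup>\<gamma>\<close>.\<close>

section \<open>Transposed Vandermonde systems\<close>

lemma vandermonde_combination_eq_0:
  fixes \<beta> d :: "'a \<Rightarrow> real"
  assumes "finite I" and "inj_on \<beta> I"
    and "\<And>k. k < card I \<Longrightarrow> (\<Sum>i\<in>I. d i * \<beta> i ^ k) = 0"
    and "j \<in> I"
  shows "d j = 0"
proof -
  define p where "p = (\<Prod>i\<in>I - {j}. [:- \<beta> i, 1:])"
  have poly_p: "poly p x = (\<Prod>i\<in>I - {j}. x - \<beta> i)" for x
    unfolding p_def by (simp add: poly_prod)
  have "degree p \<le> card (I - {j})"
    unfolding p_def using degree_prod_sum_le[of "I - {j}" "\<lambda>i. [:- \<beta> i, 1:]"] assms(1)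
    by (simp add: o_def)
  then have deg: "degree p < card I"
    using card_Diff1_less[OF assms(1,4)] by linarith
  have "(\<Sum>i\<in>I. d i * poly p (\<beta> i)) = (\<Sum>k\<le>degree p. coeff p k * (\<Sum>i\<in>I. d i * \<beta> i ^ k))"
    by (simp add: poly_altdef sum_distrib_left sum_distrib_right mult_ac sum.swap[of _ I])
  also have "\<dots> = 0"
    using assms(3) deg by simp
  finally have "(\<Sum>i\<in>I. d i * poly p (\<beta> i)) = 0" .
  moreover have "poly p (\<beta> i) = 0" if "i \<in> I - {j}" for i
    unfolding poly_p using that assms(1) by (auto intro: prod_zero)
  then have "(\<Sum>i\<in>I. d i * poly p (\<beta> i)) = d j * poly p (\<beta> j)"
    using assms(1,4) by (simp add: sum.remove)
  moreover have "poly p (\<beta> j) \<noteq> 0"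
    unfolding poly_p using assms(1,2,4) by (auto simp: inj_on_def)
  ultimately show ?thesis by simp
qed

lemma vandermonde_system_solvable_lessThan:
  fixes \<beta> e :: "nat \<Rightarrow> real"
  assumes "inj_on \<beta> {..<n}"
  shows "\<exists>v. \<forall>k<n. (\<Sum>i<n. v i * \<beta> i ^ k) = e k"
proof -
  define A :: "real mat" where "A = mat n n (\<lambda>(k, i). \<beta> i ^ k)"
  have A: "A \<in> carrier_mat n n"
    unfolding A_def by simp
  have A_mult: "(A *\<^sub>v v) $ k = (\<Sum>i<n. v $ i * \<beta> i ^ k)" if "k < n" "v \<in> carrier_vec n" for k v
    using that unfolding A_def
    by (auto simp: scalar_prod_def mult.commute lessThan_atLeast0 intro!: sum.cong)
  have "det A \<noteq> 0"
  proof
    assume "det A = 0"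
    then obtain v where v: "v \<in> carrier_vec n" "v \<noteq> 0\<^sub>v n" "A *\<^sub>v v = 0\<^sub>v n"
      using det_0_iff_vec_prod_zero_field[OF A] by auto
    have "(\<Sum>i<n. v $ i * \<beta> i ^ k) = 0" if "k < n" for k
      using A_mult[OF that v(1)] v(3) that by simp
    then have "v $ i = 0" if "i < n" for i
      using vandermonde_combination_eq_0[of "{..<n}" \<beta> "\<lambda>i. v $ i" i] assms that by simp
    then have "v = 0\<^sub>v n"
      using v(1) by (intro eq_vecI) auto
    with v(2) show False ..
  qed
  then obtain B where B: "B \<in> carrier_mat n n" and AB: "A * B = 1\<^sub>m n"
    using det_non_zero_imp_unit[OF A] unfolding Units_def ring_mat_def by auto
  define w where "w = B *\<^sub>v vec n e"
  have w: "w \<in> carrier_vec n"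
    unfolding w_def using B by simp
  have "A *\<^sub>v w = vec n e"
    unfolding w_def using A B AB by (simp add: assoc_mult_mat_vec[symmetric])
  then show ?thesis
    using A_mult[OF _ w] by (intro exI[of _ "\<lambda>i. w $ i"]) auto
qed

lemma vandermonde_system_solvable:
  fixes \<beta> :: "'a \<Rightarrow> real" and e :: "nat \<Rightarrow> real"
  assumes "finite I" and "inj_on \<beta> I"
  shows "\<exists>v. \<forall>k<card I. (\<Sum>i\<in>I. v i * \<beta> i ^ k) = e k"
proof -
  obtain g where g: "bij_betw g {..<card I} I"
    using ex_bij_betw_nat_finite[OF assms(1)] by (auto simp: atLeast0LessThan)
  have "inj_on (\<beta> \<circ> g) {..<card I}"
    using g assms(2) by (auto simp: bij_betw_def intro: comp_inj_on)
  then obtain v where v: "\<forall>k<card I. (\<Sum>i<card I. v i * (\<beta> \<circ> g) i ^ k) = e k"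
    using vandermonde_system_solvable_lessThan by blast
  define w where "w = v \<circ> inv_into {..<card I} g"
  have "(\<Sum>i\<in>I. w i * \<beta> i ^ k) = (\<Sum>i<card I. v i * (\<beta> \<circ> g) i ^ k)" for k
    unfolding w_def sum.reindex_bij_betw[OF g, symmetric]
    using g by (intro sum.cong) (auto simp: bij_betw_inv_into_left)
  with v show ?thesis
    by (intro exI[of _ w]) simp
qed

section \<open>Coefficients of the identity network\<close>

definition power_identity_coeffs :: "nat \<Rightarrow> (nat \<Rightarrow> real) \<Rightarrow> (nat \<Rightarrow> real) \<Rightarrow> bool" where
  "power_identity_coeffs \<gamma> b c \<longleftrightarrow>
     (\<forall>k\<le>\<gamma>. (if k = \<gamma> then c 0 else 0) + (\<Sum>i=1..\<gamma>. c i * b i ^ k)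
              = (if k = \<gamma> - 1 then 1 / real \<gamma> else 0))"

lemma power_identity_coeffs_iff:
  assumes "\<gamma> \<ge> 1"
  shows "power_identity_coeffs \<gamma> b c \<longleftrightarrow>
    (\<forall>k<\<gamma>. (\<Sum>i=1..\<gamma>. c i * b i ^ k) = (if k = \<gamma> - 1 then 1 / real \<gamma> else 0)) \<and>
    c 0 = - (\<Sum>i=1..\<gamma>. c i * b i ^ \<gamma>)"
proof -
  have split: "(\<forall>k\<le>\<gamma>. Q k) \<longleftrightarrow> (\<forall>k<\<gamma>. Q k) \<and> Q \<gamma>" for Q
    by (auto simp: le_less)
  have "\<gamma> \<noteq> \<gamma> - 1"
    using assms by simp
  then show ?thesis
    unfolding power_identity_coeffs_def split by (simp add: eq_neg_iff_add_eq_0)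
qed

lemma ex1_power_identity_coeffs:
  assumes "\<gamma> \<ge> 1" and "inj_on b {1..\<gamma>}"
  shows "\<exists>!c. (\<forall>i>\<gamma>. c i = 0) \<and> power_identity_coeffs \<gamma> b c"
proof -
  let ?r = "\<lambda>k. if k = \<gamma> - 1 then 1 / real \<gamma> else 0"
  obtain v where v: "\<forall>k<\<gamma>. (\<Sum>i=1..\<gamma>. v i * b i ^ k) = ?r k"
    using vandermonde_system_solvable[of "{1..\<gamma>}" b ?r] assms(2) by auto
  define c where "c i = (if i = 0 then - (\<Sum>j=1..\<gamma>. v j * b j ^ \<gamma>) else if i \<le> \<gamma> then v i else 0)"
    for i
  have sum_c: "(\<Sum>i=1..\<gamma>. c i * b i ^ k) = (\<Sum>i=1..\<gamma>. v i * b i ^ k)" for k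
    by (rule sum.cong) (auto simp: c_def)
  have c: "power_identity_coeffs \<gamma> b c"
    using v assms(1) by (simp add: power_identity_coeffs_iff sum_c) (simp add: c_def)
  have vanish: "\<forall>i>\<gamma>. c i = 0"
    by (simp add: c_def)
  have unique: "c' = c" if c': "\<forall>i>\<gamma>. c' i = 0" "power_identity_coeffs \<gamma> b c'" for c'
  proof -
    have "(\<Sum>i\<in>{1..\<gamma>}. (c' i - c i) * b i ^ k) = 0" if "k < card {1..\<gamma>}" for k
      using that c'(2) c assms(1) by (simp add: power_identity_coeffs_iff left_diff_distrib sum_subtractf)
    then have on_nodes: "c' i = c i" if "i \<in> {1..\<gamma>}" for i
      using vandermonde_combination_eq_0[of "{1..\<gamma>}" b "\<lambda>i. c' i - c i" i] assms(2) that by simp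
    have "(\<Sum>i=1..\<gamma>. c' i * b i ^ \<gamma>) = (\<Sum>i=1..\<gamma>. c i * b i ^ \<gamma>)"
      by (rule sum.cong) (simp_all add: on_nodes)
    then have "c' 0 = c 0"
      using c'(2) c assms(1) by (simp add: power_identity_coeffs_iff)
    show "c' = c"
    proof
      fix i
      consider "i = 0" | "i \<in> {1..\<gamma>}" | "i > \<gamma>"
        by fastforce
      then show "c' i = c i"
        using \<open>c' 0 = c 0\<close> on_nodes c'(1) by cases (simp_all add: c_def)
    qed
  qed
  show ?thesis
  proof (rule ex1I[of _ c])
    show "(\<forall>i>\<gamma>. c i = 0) \<and> power_identity_coeffs \<gamma> b c"
      using vanish c ..
  next
    fix c' assume "(\<forall>i>\<gamma>. c' i = 0) \<and> power_identity_coeffs \<gamma> b c'"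
    then show "c' = c"
      by (elim conjE) (rule unique)
  qed
qed

lemma power_identity_coeffs_sum_shifted_powers:
  assumes "\<gamma> \<ge> 1" and "power_identity_coeffs \<gamma> b c"
  shows "c 0 + (\<Sum>i=1..\<gamma>. c i * (x + b i) ^ \<gamma>) = x"
proof -
  let ?S = "\<lambda>k. \<Sum>i=1..\<gamma>. c i * b i ^ k"
  have eqs: "\<forall>k<\<gamma>. ?S k = (if k = \<gamma> - 1 then 1 / real \<gamma> else 0)" "c 0 = - ?S \<gamma>"
    using assms by (simp_all add: power_identity_coeffs_iff)
  have "(\<Sum>i=1..\<gamma>. c i * (x + b i) ^ \<gamma>) = (\<Sum>k\<le>\<gamma>. of_nat (\<gamma> choose k) * x ^ (\<gamma> - k) * ?S k)"
    by (simp add: add.commute[of x] binomial_ring sum_distrib_left sum_distrib_right mult_ac)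
      (rule sum.swap)
  also have "\<dots> = (\<Sum>k<\<gamma>. of_nat (\<gamma> choose k) * x ^ (\<gamma> - k) * ?S k) + ?S \<gamma>"
    by (simp add: lessThan_Suc_atMost[symmetric])
  also have "(\<Sum>k<\<gamma>. of_nat (\<gamma> choose k) * x ^ (\<gamma> - k) * ?S k)
      = (\<Sum>k<\<gamma>. if k = \<gamma> - 1 then of_nat (\<gamma> choose k) * x ^ (\<gamma> - k) * (1 / real \<gamma>) else 0)"
    using eqs(1) by (intro sum.cong) auto
  also have "\<dots> = of_nat (\<gamma> choose (\<gamma> - 1)) * x ^ (\<gamma> - (\<gamma> - 1)) * (1 / real \<gamma>)"
    using assms(1) by simp
  also have "\<dots> = x"
    using assms(1) by (cases \<gamma>) (auto simp: binomial_Suc_n)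
  finally show ?thesis
    using eqs(2) by simp
qed

definition diag_mat :: "real list \<Rightarrow> real list list" where
  "diag_mat xs = map (\<lambda>i. map (\<lambda>j. if i = j then xs ! i else 0) [0..<length xs]) [0..<length xs]"

lemma length_diag_mat [simp]: "length (diag_mat xs) = length xs"
  by (simp add: diag_mat_def)

lemma diag_mat_nth:
  "i < length xs \<Longrightarrow> j < length xs \<Longrightarrow> diag_mat xs ! i ! j = (if i = j then xs ! i else 0)"
  by (simp add: diag_mat_def)

lemma blockdiag_scalars: "blockdiag (map (\<lambda>x. [[x]]) xs) = diag_mat xs"
proof (induction xs)
  case Nil
  then show ?case by (simp add: diag_mat_def)
next
  case (Cons x xs)
  have cols: "sum_list (replicate n (Suc 0)) = n" for n
    by (induction n) auto
  show ?case
    by (rule nth_equalityI)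
      (auto simp: Cons cols diag_mat_def o_def ncols_def map_replicate_const nth_append
        nth_Cons' upt_conv_Cons map_Suc_upt[symmetric] simp del: upt_Suc)
qed

lemma matmul_diag_mat_ones: "matmul (diag_mat xs) (replicate (length xs) [1]) = map (\<lambda>x. [x]) xs"
proof (rule nth_equalityI)
  fix i assume "i < length (matmul (diag_mat xs) (replicate (length xs) [1]))"
  then have i: "i < length xs"
    by (simp add: matmul_def)
  then have "xs \<noteq> []"
    by auto
  have "(\<Sum>k<length xs. diag_mat xs ! i ! k * replicate (length xs) [1] ! k ! 0)
      = (\<Sum>k<length xs. if i = k then xs ! i else 0)"
    using i by (intro sum.cong) (simp_all add: diag_mat_nth)
  with i \<open>xs \<noteq> []\<close> show "matmul (diag_mat xs) (replicate (length xs) [1]) ! i = map (\<lambda>x. [x]) xs ! i"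
    by (simp add: matmul_def ncols_def)
qed (simp add: matmul_def)

lemma matmul_ones_diag_mat: "matmul [replicate (length xs) 1] (diag_mat xs) = [xs]"
proof (cases "xs = []")
  case True
  then show ?thesis
    by (simp add: matmul_def diag_mat_def ncols_def)
next
  case False
  then have "ncols (diag_mat xs) = length xs"
    by (simp add: ncols_def diag_mat_def hd_map)
  then have "matmul [replicate (length xs) 1] (diag_mat xs) =
      [map (\<lambda>j. \<Sum>k<length xs. replicate (length xs) 1 ! k * diag_mat xs ! k ! j) [0..<length xs]]"
    by (simp add: matmul_def)
  also have "map (\<lambda>j. \<Sum>k<length xs. replicate (length xs) 1 ! k * diag_mat xs ! k ! j) [0..<length xs]
      = map (\<lambda>j. xs ! j) [0..<length xs]"
  proof (rule map_cong)
    fix j assume "j \<in> set [0..<length xs]"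
    then have j: "j < length xs"
      by simp
    have "(\<Sum>k<length xs. replicate (length xs) 1 ! k * diag_mat xs ! k ! j)
        = (\<Sum>k<length xs. if k = j then xs ! j else 0)"
      using j by (intro sum.cong) (auto simp: diag_mat_nth)
    then show "(\<Sum>k<length xs. replicate (length xs) 1 ! k * diag_mat xs ! k ! j) = xs ! j"
      using j by simp
  qed simp
  finally show ?thesis
    by (simp add: map_nth)
qed

lemma matmul_unit_row: "matmul [[1]] [r] = [r]"
proof -
  have "matmul [[1]] [r] = [map (\<lambda>j. r ! j) [0..<length r]]"
    by (simp add: matmul_def ncols_def)
  then show ?thesis
    by (simp add: map_nth)
qed

lemma matvec_replicate_0: "matvec W (replicate n 0) = replicate (length W) 0"
  by (simp add: matvec_def map_replicate_const)

lemma vadd_replicate_0: "length ys = n \<Longrightarrow> vadd (replicate n 0) ys = ys"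
  by (induction ys arbitrary: n) (auto simp: vadd_def)

lemma vadd_replicate_left: "vadd (replicate (length ys) x) ys = map (\<lambda>y. x + y) ys"
  by (induction ys) (auto simp: vadd_def)

section \<open>Shallow networks with unit input weights\<close>

lemma ann_dims_annA1: "ann_dims (annA1 w v) = [1, 1]"
  by (simp add: annA1_def ann_dims_def ncols_def)

definition shallow_net :: "real list \<Rightarrow> real list \<Rightarrow> real \<Rightarrow> ann" where
  "shallow_net bs cs d = [(replicate (length bs) [1], bs), ([cs], [d])]"

lemma ann_dims_shallow_net: "bs \<noteq> [] \<Longrightarrow> ann_dims (shallow_net bs cs d) = [1, length bs, 1]"
  by (simp add: shallow_net_def ann_dims_def ncols_def)

lemma is_ANN_shallow_net:
  assumes "bs \<noteq> []" and "length cs = length bs"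
  shows "is_ANN (shallow_net bs cs d)"
  using assms unfolding is_ANN_def ann_dims_shallow_net[OF assms(1)]
  by (auto simp: shallow_net_def less_Suc_eq nth_Cons' Suc_le_eq)

lemma realize_shallow_net:
  assumes "length cs = length bs"
  shows "realize a (shallow_net bs cs d) [x] = [(\<Sum>j<length bs. cs ! j * a (x + bs ! j)) + d]"
proof -
  have "matvec (replicate (length bs) [1]) [x] = replicate (length bs) x"
    by (simp add: matvec_def map_replicate_const)
  then have hidden: "affine (replicate (length bs) [1], bs) [x] = map (\<lambda>\<beta>. x + \<beta>) bs"
    by (simp add: affine_def vadd_replicate_left)
  have "(\<Sum>j<length bs. cs ! j * map a (map (\<lambda>\<beta>. x + \<beta>) bs) ! j) = (\<Sum>j<length bs. cs ! j * a (x + bs ! j))"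
    by (rule sum.cong) simp_all
  then show ?thesis
    using assms by (simp add: shallow_net_def hidden affine_def matvec_def vadd_def)
qed

lemma smul_comp_annid_annA1: "smul c (comp (annid 1) (annA1 1 b)) = shallow_net [b] [c] 0"
  by (simp add: smul_def comp_def annid_def annA1_def annA_def shallow_net_def ann_O_def
      ann_dims_def matmul_def matvec_def vadd_def idm_def ncols_def)

lemma par_shallow_nets:
  assumes "is \<noteq> []"
  shows "par (map (\<lambda>i. shallow_net [b i] [c i] 0) is) =
    [(diag_mat (replicate (length is) 1), map b is), (diag_mat (map c is), replicate (length is) 0)]"
proof -
  have "par (map (\<lambda>i. shallow_net [b i] [c i] 0) is) =
      [(blockdiag (map (\<lambda>i. [[1]]) is), concat (map (\<lambda>i. [b i]) is)),
       (blockdiag (map (\<lambda>i. [[c i]]) is), concat (map (\<lambda>i. [0]) is))]"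
    using assms by (simp add: par_def shallow_net_def hd_map upt_conv_Cons o_def)
  also have "\<dots> = [(diag_mat (replicate (length is) 1), map b is), (diag_mat (map c is), replicate (length is) 0)]"
    using blockdiag_scalars[of "replicate (length is) 1"] blockdiag_scalars[of "map c is"]
    by (simp add: map_replicate_const o_def)
  finally show ?thesis .
qed

lemma annT_1: "annT 1 n = [(replicate n [1], replicate n 0)]"
  by (simp add: annT_def annA_def idm_def)

lemma annS_1: "annS 1 n = [([replicate n 1], [0])]"
  by (simp add: annS_def annA_def idm_def)

lemma annsum_shallow_nets:
  assumes "is \<noteq> []"
  shows "annsum (map (\<lambda>i. shallow_net [b i] [c i] 0) is) = shallow_net (map b is) (map c is) 0"
proof -
  let ?n = "length is"
  let ?\<Phi>s = "map (\<lambda>i. shallow_net [b i] [c i] 0) is"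
  have "ann_I (hd ?\<Phi>s) = 1" "ann_O (hd ?\<Phi>s) = 1"
    using assms by (simp_all add: hd_map ann_I_def ann_O_def ann_dims_shallow_net)
  then have "annsum ?\<Phi>s = comp (annS 1 ?n) (comp (par ?\<Phi>s) (annT 1 ?n))"
    by (simp only: annsum_def length_map)
  also have "comp (par ?\<Phi>s) (annT 1 ?n) =
      [(replicate ?n [1], map b is), (diag_mat (map c is), replicate ?n 0)]"
    using matmul_diag_mat_ones[of "replicate ?n 1"]
    unfolding par_shallow_nets[OF assms] annT_1 comp_def
    by (simp add: matvec_replicate_0 vadd_replicate_0 map_replicate_const)
  also have "comp (annS 1 ?n) \<dots> = shallow_net (map b is) (map c is) 0"
    using matmul_ones_diag_mat[of "map c is"]
    unfolding annS_1 comp_def shallow_net_def by (simp add: matvec_replicate_0 vadd_def)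
  finally show ?thesis .
qed

lemma comp_annA1_shallow_net: "comp (annA1 1 d) (shallow_net bs cs e) = shallow_net bs cs (e + d)"
  by (simp add: comp_def annA1_def shallow_net_def matmul_unit_row matvec_def vadd_def)

lemma realize_power_identity_net:
  assumes "\<gamma> \<ge> 1" and "power_identity_coeffs \<gamma> b c" and "\<And>x. a x = x ^ \<gamma>"
  shows "realize a (shallow_net (map b [1..<\<gamma>+1]) (map c [1..<\<gamma>+1]) (c 0)) [x] = [x]"
proof -
  have "(\<Sum>j<\<gamma>. c ([1..<\<gamma>+1] ! j) * a (x + b ([1..<\<gamma>+1] ! j))) = (\<Sum>i=1..\<gamma>. c i * (x + b i) ^ \<gamma>)"
    unfolding sum_bounds_lt_plus1[symmetric] by (simp add: assms(3) del: upt_Suc)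
  then show ?thesis
    using power_identity_coeffs_sum_shifted_powers[OF assms(1,2), of x]
    by (simp add: realize_shallow_net add.commute del: upt_Suc)
qed

theorem mainTheorem9:
  fixes \<gamma> :: nat and b :: "nat \<Rightarrow> real" and a :: "real \<Rightarrow> real"
  assumes "\<gamma> \<ge> 1" and "\<gamma> \<noteq> 1"
    and "\<And>i j. 1 \<le> i \<Longrightarrow> i < j \<Longrightarrow> j \<le> \<gamma> \<Longrightarrow> b i < b j"
    and "\<And>x. a x = x ^ \<gamma>"
  shows "(\<exists>!c :: nat \<Rightarrow> real. (\<forall>i>\<gamma>. c i = 0) \<and>
            (\<forall>k\<le>\<gamma>. (if k = \<gamma> then c 0 else 0) + (\<Sum>i=1..\<gamma>. c i * b i ^ k)
                     = (if k = \<gamma> - 1 then 1 / real \<gamma> else 0)))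
       \<and> (\<forall>c :: nat \<Rightarrow> real.
            (\<forall>k\<le>\<gamma>. (if k = \<gamma> then c 0 else 0) + (\<Sum>i=1..\<gamma>. c i * b i ^ k)
                     = (if k = \<gamma> - 1 then 1 / real \<gamma> else 0)) \<longrightarrow>
            (let \<Phi>s = map (\<lambda>i. smul (c i) (comp (annid 1) (annA1 1 (b i)))) [1..<\<gamma>+1];
                 \<Psi> = comp (annA1 1 (c 0)) (annsum \<Phi>s)
             in (\<forall>\<Phi>\<in>set \<Phi>s. is_ANN \<Phi> \<and> ann_dims \<Phi> = ann_dims (hd \<Phi>s))
                \<and> is_ANN (annsum \<Phi>s) \<and> ann_O (annsum \<Phi>s) = ann_I (annA1 1 (c 0))
                \<and> is_ANN \<Psi>
                \<and> ann_dims \<Psi> = [1, \<gamma>, 1]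
                \<and> continuous_on UNIV (\<lambda>x. hd (realize a \<Psi> [x]))
                \<and> (\<forall>x. realize a \<Psi> [x] = [x])))"
proof (intro conjI allI impI)
  have "inj_on b {1..\<gamma>}"
    by (intro strict_mono_on_imp_inj_on strict_mono_onI) (auto intro: assms(3))
  with assms(1) show "\<exists>!c. (\<forall>i>\<gamma>. c i = 0) \<and>
      (\<forall>k\<le>\<gamma>. (if k = \<gamma> then c 0 else 0) + (\<Sum>i=1..\<gamma>. c i * b i ^ k)
               = (if k = \<gamma> - 1 then 1 / real \<gamma> else 0))"
    by (rule ex1_power_identity_coeffs[unfolded power_identity_coeffs_def])
next
  fix c :: "nat \<Rightarrow> real"
  assume "\<forall>k\<le>\<gamma>. (if k = \<gamma> then c 0 else 0) + (\<Sum>i=1..\<gamma>. c i * b i ^ k)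
               = (if k = \<gamma> - 1 then 1 / real \<gamma> else 0)"
  then have c: "power_identity_coeffs \<gamma> b c"
    unfolding power_identity_coeffs_def .
  define idx where "idx = [1..<\<gamma>+1]"
  have idx: "idx \<noteq> []" "length idx = \<gamma>"
    using assms(1) by (auto simp: idx_def)
  show "let \<Phi>s = map (\<lambda>i. smul (c i) (comp (annid 1) (annA1 1 (b i)))) [1..<\<gamma>+1];
            \<Psi> = comp (annA1 1 (c 0)) (annsum \<Phi>s)
        in (\<forall>\<Phi>\<in>set \<Phi>s. is_ANN \<Phi> \<and> ann_dims \<Phi> = ann_dims (hd \<Phi>s))
           \<and> is_ANN (annsum \<Phi>s) \<and> ann_O (annsum \<Phi>s) = ann_I (annA1 1 (c 0))
           \<and> is_ANN \<Psi> \<and> ann_dims \<Psi> = [1, \<gamma>, 1]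
           \<and> continuous_on UNIV (\<lambda>x. hd (realize a \<Psi> [x]))
           \<and> (\<forall>x. realize a \<Psi> [x] = [x])"
    unfolding idx_def[symmetric] Let_def smul_comp_annid_annA1 annsum_shallow_nets[OF idx(1)]
      comp_annA1_shallow_net add_0
    using idx realize_power_identity_net[OF assms(1) c assms(4), folded idx_def]
    by (simp add: is_ANN_shallow_net ann_dims_shallow_net hd_map ann_I_def ann_O_def ann_dims_annA1
        continuous_on_id)
qed

end
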